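(* Let $X,Y\subseteq\omega$. If there is an embedding $\mathcal{K}_2^X \hookrightarrow \mathcal{K}_1^Y$ then $X' \le_T Y$.
   Context: $X'$ denotes the Turing jump of $X$. A pca is a set with a partial binary application operation containing distinct $\mathrm{s},\mathrm{k}$ with $\mathrm{k}ab\downarrow=a$, $\mathrm{s}ab\downarrow$, $\mathrm{s}abc\simeq(ac)(bc)$. An embedding of pcas is an injective map $f$ with: if $ab$ is defined then $f(a)f(b)$ is defined and equals $f(ab)$. $\mathcal{K}_1^Y$ is the pca on $\omega$ with $n\cdot m=\Phi^Y_n(m)$, the $n$-th partial $Y$-computable function applied to $m$. $\mathcal{K}_2^X$: elements are the total $X$-computable functions $g:\omega\to\omega$, with $g\cdot h$ the function $n\mapsto\Phi^{g\oplus h}_{g(0)}(n)$ ($\Phi_e$ the $e$-th Turing functional, $(g\oplus h)(2n)=g(n)$, $(g\oplus h)(2n+1)=h(n)$), defined if and only if this function is total. *)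

theory Defs
  imports Main "HOL-Library.Nat_Bijection"
begin

datatype recf =
    Zero | Succ | Ident | Fst | Snd | Oracle
  | Comp recf recf
  | Pair recf recf
  | Rec recf recf
  | Mu recf

inductive eval :: "(nat \<Rightarrow> nat) \<Rightarrow> recf \<Rightarrow> nat \<Rightarrow> nat \<Rightarrow> bool"
  for f :: "nat \<Rightarrow> nat" where
  ev_zero: "eval f Zero x 0"
| ev_succ: "eval f Succ x (Suc x)"
| ev_id: "eval f Ident x x"
| ev_fst: "eval f Fst x (fst (prod_decode x))"
| ev_snd: "eval f Snd x (snd (prod_decode x))"
| ev_oracle: "eval f Oracle x (f x)"
| ev_comp: "eval f d x y \<Longrightarrow> eval f c y z \<Longrightarrow> eval f (Comp c d) x z"
| ev_pair: "eval f c x y \<Longrightarrow> eval f d x z \<Longrightarrow> eval f (Pair c d) x (prod_encode (y, z))"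
| ev_rec0: "eval f c a y \<Longrightarrow> eval f (Rec c d) (prod_encode (a, 0)) y"
| ev_recS: "eval f (Rec c d) (prod_encode (a, n)) y \<Longrightarrow>
             eval f d (prod_encode (prod_encode (a, n), y)) z \<Longrightarrow>
             eval f (Rec c d) (prod_encode (a, Suc n)) z"
| ev_mu: "eval f c (prod_encode (x, n)) 0 \<Longrightarrow>
          (\<forall>i<n. \<exists>y. eval f c (prod_encode (x, i)) (Suc y)) \<Longrightarrow>
          eval f (Mu c) x n"

fun encode :: "recf \<Rightarrow> nat" where
  "encode Zero = prod_encode (0, 0)"
| "encode Succ = prod_encode (1, 0)"
| "encode Ident = prod_encode (2, 0)"
| "encode Fst = prod_encode (3, 0)"
| "encode Snd = prod_encode (4, 0)"
| "encode Oracle = prod_encode (5, 0)"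
| "encode (Comp c d) = prod_encode (6, prod_encode (encode c, encode d))"
| "encode (Pair c d) = prod_encode (7, prod_encode (encode c, encode d))"
| "encode (Rec c d) = prod_encode (8, prod_encode (encode c, encode d))"
| "encode (Mu c) = prod_encode (9, encode c)"

text \<open>Phi f e x y: the e-th Turing functional with oracle f, on input x, converges
with output y. Numbers not encoding any program index the empty function.\<close>

definition Phi :: "(nat \<Rightarrow> nat) \<Rightarrow> nat \<Rightarrow> nat \<Rightarrow> nat \<Rightarrow> bool" where
  "Phi f e x y \<longleftrightarrow> (\<exists>c. encode c = e \<and> eval f c x y)"

definition chi :: "nat set \<Rightarrow> nat \<Rightarrow> nat" where
  "chi A x = (if x \<in> A then 1 else 0)"

definition join :: "(nat \<Rightarrow> nat) \<Rightarrow> (nat \<Rightarrow> nat) \<Rightarrow> nat \<Rightarrow> nat" where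
  "join g h x = (if even x then g (x div 2) else h (x div 2))"

definition computable_in :: "nat set \<Rightarrow> (nat \<Rightarrow> nat) \<Rightarrow> bool" where
  "computable_in X g \<longleftrightarrow> (\<exists>e. \<forall>n. Phi (chi X) e n (g n))"

definition turing_le :: "nat set \<Rightarrow> nat set \<Rightarrow> bool" where
  "turing_le A B \<longleftrightarrow> computable_in B (chi A)"

definition jump :: "nat set \<Rightarrow> nat set" where
  "jump X = {e. \<exists>y. Phi (chi X) e e y}"

definition app1 :: "nat set \<Rightarrow> nat \<Rightarrow> nat \<Rightarrow> nat \<Rightarrow> bool" where
  "app1 Y n m k \<longleftrightarrow> Phi (chi Y) n m k"

definition K2_carrier :: "nat set \<Rightarrow> (nat \<Rightarrow> nat) set" where
  "K2_carrier X = {g. computable_in X g}"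

definition app2 :: "(nat \<Rightarrow> nat) \<Rightarrow> (nat \<Rightarrow> nat) \<Rightarrow> (nat \<Rightarrow> nat) \<Rightarrow> bool" where
  "app2 g h k \<longleftrightarrow> (\<forall>n. Phi (join g h) (g 0) n (k n))"

definition K2_embeds_K1 :: "nat set \<Rightarrow> nat set \<Rightarrow> ((nat \<Rightarrow> nat) \<Rightarrow> nat) \<Rightarrow> bool" where
  "K2_embeds_K1 X Y f \<longleftrightarrow>
     inj_on f (K2_carrier X) \<and>
     (\<forall>g\<in>K2_carrier X. \<forall>h\<in>K2_carrier X. \<forall>k.
        app2 g h k \<longrightarrow> app1 Y (f g) (f h) (f k))"

end

theory Submission
  imports Defs
begin

text \<open>Let \<open>f\<close> embed \<open>K\<^sub>2\<^sup>X\<close> into \<open>K\<^sub>1\<^sup>Y\<close>. The constant functions \<open>\<lambda>_. e\<close> lie in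
  \<open>K\<^sub>2\<^sup>X\<close>, and a fixed element maps \<open>\<lambda>_. e\<close> to \<open>\<lambda>_. e + 1\<close>; its image under \<open>f\<close> is
  an index of a \<open>Y\<close>-partial computable function that steps from \<open>f (\<lambda>_. e)\<close> to
  \<open>f (\<lambda>_. e + 1)\<close>, so \<open>e \<mapsto> f (\<lambda>_. e)\<close> is \<open>Y\<close>-computable by iteration. A second
  element maps \<open>\<lambda>_. e\<close> to the \<open>X\<close>-computable function \<open>t\<^sub>e\<close> with \<open>t\<^sub>e w \<noteq> 0\<close> iff
  \<open>w\<close> codes a derivation showing that \<open>\<Phi>\<^sup>X\<^sub>e(e)\<close> converges, so \<open>t\<^sub>e = 0\<close> exactly
  when \<open>e \<notin> X'\<close>. By injectivity of \<open>f\<close>, \<open>e \<in> X'\<close> iff \<open>f t\<^sub>e \<noteq> f (\<lambda>_. 0)\<close>, and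
  \<open>f t\<^sub>e\<close> is again computed from \<open>f (\<lambda>_. e)\<close> by a fixed index.

  The bulk of the work is a normal form for convergence: a calculus of derivations whose
  axioms and rules are decided by an expression with bounded quantifiers, which compiles to
  a program.\<close>

abbreviation pair :: "nat \<Rightarrow> nat \<Rightarrow> nat" where "pair a b \<equiv> prod_encode (a, b)"
abbreviation pfst :: "nat \<Rightarrow> nat" where "pfst z \<equiv> fst (prod_decode z)"
abbreviation psnd :: "nat \<Rightarrow> nat" where "psnd z \<equiv> snd (prod_decode z)"

lemma pfst_pair [simp]: "pfst (pair a b) = a"
  and psnd_pair [simp]: "psnd (pair a b) = b"
  by (simp_all add: prod_encode_inverse)

lemma eval_Rec:
  assumes "eval g c a (F 0)" and "\<And>n. eval g d (pair (pair a n) (F n)) (F (Suc n))"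
  shows "eval g (Rec c d) (pair a k) (F k)"
  by (induction k) (auto intro: ev_rec0 ev_recS assms)

primrec prog_const :: "nat \<Rightarrow> recf" where
  "prog_const 0 = Zero"
| "prog_const (Suc k) = Comp Succ (prog_const k)"

lemma eval_prog_const: "eval g (prog_const k) x k"
  by (induction k) (auto intro: eval.intros)

lemma eval_Rec_Ident_funpow:
  assumes "\<And>z. eval g d z (F (psnd z))"
  shows "eval g (Rec Ident d) (pair a k) ((F ^^ k) a)"
proof (rule eval_Rec)
  show "eval g Ident a ((F ^^ 0) a)" by (simp add: ev_id)
  show "eval g d (pair (pair a n) ((F ^^ n) a)) ((F ^^ Suc n) a)" for n
    using assms[of "pair (pair a n) ((F ^^ n) a)"] by simp
qed

text \<open>The recursion runs on \<open>\<langle>x, C\<rangle>\<close>: its base case gives \<open>b x\<close>, every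
  later stage gives \<open>a x\<close>.\<close>
definition prog_if :: "recf \<Rightarrow> recf \<Rightarrow> recf \<Rightarrow> recf" where
  "prog_if c a b = Comp (Rec b (Comp a (Comp Fst Fst))) (Pair Ident c)"

lemma eval_prog_if:
  assumes "eval g c x C" "eval g a x A" "eval g b x B"
  shows "eval g (prog_if c a b) x (if C \<noteq> 0 then A else B)"
proof -
  have "eval g (Comp Fst Fst) (pair (pair x n) y) x" for n y
    by (metis ev_comp ev_fst pfst_pair)
  then have "eval g (Rec b (Comp a (Comp Fst Fst))) (pair x C) (if C \<noteq> 0 then A else B)"
    using ev_comp[OF _ assms(2)] assms(3)
    by (intro eval_Rec[where F = "\<lambda>k. if k \<noteq> 0 then A else B"]) auto
  then show ?thesis
    unfolding prog_if_def by (blast intro: ev_comp ev_pair ev_id assms(1))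
qed

definition prog_test :: "recf \<Rightarrow> recf" where
  "prog_test c = prog_if c (prog_const 1) Zero"

lemma eval_prog_test: "eval g c x C \<Longrightarrow> eval g (prog_test c) x (of_bool (C \<noteq> 0))"
  unfolding prog_test_def of_bool_def by (rule eval_prog_if[OF _ eval_prog_const ev_zero])

definition prog_pred :: recf where
  "prog_pred = Comp (Rec Zero (Comp Snd Fst)) (Pair Zero Ident)"

lemma eval_prog_pred: "eval g prog_pred x (x - 1)"
proof -
  have "eval g (Comp Snd Fst) (pair (pair 0 n) y) n" for n y
    by (metis ev_comp ev_fst ev_snd pfst_pair psnd_pair)
  then have "eval g (Rec Zero (Comp Snd Fst)) (pair 0 x) (x - 1)"
    by (intro eval_Rec[where F = "\<lambda>n. n - 1"]) (auto intro: ev_zero)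
  then show ?thesis
    unfolding prog_pred_def by (blast intro: ev_comp ev_pair ev_zero ev_id)
qed

definition prog_sub :: recf where "prog_sub = Rec Ident (Comp prog_pred Snd)"
definition prog_add :: recf where "prog_add = Rec Ident (Comp Succ Snd)"
definition prog_iter_snd :: recf where "prog_iter_snd = Rec Ident (Comp Snd Snd)"

lemma eval_prog_sub: "eval g prog_sub (pair a b) (a - b)"
proof -
  have "((\<lambda>z. z - 1) ^^ b) a = a - b"
    by (induction b) auto
  moreover have "eval g prog_sub (pair a b) (((\<lambda>z. z - 1) ^^ b) a)"
    unfolding prog_sub_def by (rule eval_Rec_Ident_funpow) (blast intro: ev_comp ev_snd eval_prog_pred)
  ultimately show ?thesis by simp
qed

lemma eval_prog_add: "eval g prog_add (pair a b) (a + b)"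
proof -
  have "eval g prog_add (pair a b) ((Suc ^^ b) a)"
    unfolding prog_add_def by (rule eval_Rec_Ident_funpow) (blast intro: ev_comp ev_snd ev_succ)
  then show ?thesis by (simp add: Suc_funpow add.commute)
qed

lemma eval_prog_iter_snd: "eval g prog_iter_snd (pair a b) ((psnd ^^ b) a)"
  unfolding prog_iter_snd_def by (rule eval_Rec_Ident_funpow) (blast intro: ev_comp ev_snd)

section \<open>A first-order expression language compiled to programs\<close>

datatype exp =
    EVar | EConst nat | EFst exp | ESnd exp | EPair exp exp | ESuc exp | EOracle exp
  | EIf exp exp exp | ESub exp exp | EAdd exp exp | EIterSnd exp exp | EAll exp exp | EApp exp exp

fun exp_val :: "(nat \<Rightarrow> nat) \<Rightarrow> exp \<Rightarrow> nat \<Rightarrow> nat" where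
  "exp_val g EVar x = x"
| "exp_val g (EConst k) x = k"
| "exp_val g (EFst e) x = pfst (exp_val g e x)"
| "exp_val g (ESnd e) x = psnd (exp_val g e x)"
| "exp_val g (EPair a b) x = pair (exp_val g a x) (exp_val g b x)"
| "exp_val g (ESuc e) x = Suc (exp_val g e x)"
| "exp_val g (EOracle e) x = g (exp_val g e x)"
| "exp_val g (EIf c a b) x = (if exp_val g c x \<noteq> 0 then exp_val g a x else exp_val g b x)"
| "exp_val g (ESub a b) x = exp_val g a x - exp_val g b x"
| "exp_val g (EAdd a b) x = exp_val g a x + exp_val g b x"
| "exp_val g (EIterSnd a n) x = (psnd ^^ exp_val g n x) (exp_val g a x)"
| "exp_val g (EAll n b) x = of_bool (\<forall>i\<le>exp_val g n x. exp_val g b (pair x i) \<noteq> 0)"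
| "exp_val g (EApp a b) x = exp_val g a (exp_val g b x)"

definition prog_all :: "recf \<Rightarrow> recf" where
  "prog_all b = Rec (prog_test (Comp b (Pair Ident Zero)))
     (prog_if Snd (prog_test (Comp b (Pair (Comp Fst Fst) (Comp Succ (Comp Snd Fst))))) Zero)"

lemma eval_prog_all:
  assumes b: "\<And>z. eval g b z (B z)"
  shows "eval g (prog_all b) (pair x k) (of_bool (\<forall>i\<le>k. B (pair x i) \<noteq> 0))"
  unfolding prog_all_def
proof (rule eval_Rec)
  show "eval g (prog_test (Comp b (Pair Ident Zero))) x (of_bool (\<forall>i\<le>0. B (pair x i) \<noteq> 0))"
    using eval_prog_test[OF ev_comp[OF ev_pair[OF ev_id ev_zero] b]] by simp
next
  fix n
  let ?z = "pair (pair x n) (of_bool (\<forall>i\<le>n. B (pair x i) \<noteq> 0))"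
  have next_arg: "eval g (Pair (Comp Fst Fst) (Comp Succ (Comp Snd Fst))) ?z (pair x (Suc n))"
    using ev_pair[OF ev_comp[OF ev_fst ev_fst] ev_comp[OF ev_comp[OF ev_fst ev_snd] ev_succ]]
    by (metis pfst_pair psnd_pair)
  have step: "(if psnd ?z \<noteq> 0 then of_bool (B (pair x (Suc n)) \<noteq> 0) else 0)
      = of_bool (\<forall>i\<le>Suc n. B (pair x i) \<noteq> 0)"
    by (auto simp: le_Suc_eq)
  show "eval g (prog_if Snd (prog_test (Comp b (Pair (Comp Fst Fst) (Comp Succ (Comp Snd Fst))))) Zero)
    ?z (of_bool (\<forall>i\<le>Suc n. B (pair x i) \<noteq> 0))"
    using eval_prog_if[OF ev_snd eval_prog_test[OF ev_comp[OF next_arg b]] ev_zero] unfolding step .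
qed

text \<open>The oracle calls of an expression are compiled to calls of the program \<open>Oc\<close>,
  which lets the same expression run with an oracle that is itself computed.\<close>
fun compile :: "recf \<Rightarrow> exp \<Rightarrow> recf" where
  "compile Oc EVar = Ident"
| "compile Oc (EConst k) = prog_const k"
| "compile Oc (EFst e) = Comp Fst (compile Oc e)"
| "compile Oc (ESnd e) = Comp Snd (compile Oc e)"
| "compile Oc (EPair a b) = Pair (compile Oc a) (compile Oc b)"
| "compile Oc (ESuc e) = Comp Succ (compile Oc e)"
| "compile Oc (EOracle e) = Comp Oc (compile Oc e)"
| "compile Oc (EIf c a b) = prog_if (compile Oc c) (compile Oc a) (compile Oc b)"
| "compile Oc (ESub a b) = Comp prog_sub (Pair (compile Oc a) (compile Oc b))"
| "compile Oc (EAdd a b) = Comp prog_add (Pair (compile Oc a) (compile Oc b))"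
| "compile Oc (EIterSnd a n) = Comp prog_iter_snd (Pair (compile Oc a) (compile Oc n))"
| "compile Oc (EAll n b) = Comp (prog_all (compile Oc b)) (Pair Ident (compile Oc n))"
| "compile Oc (EApp a b) = Comp (compile Oc a) (compile Oc b)"

lemma eval_compile:
  assumes Oc: "\<And>z. eval g Oc z (h z)"
  shows "eval g (compile Oc e) x (exp_val h e x)"
proof (induction e arbitrary: x)
  case (EIf c a b)
  show ?case using eval_prog_if[OF EIf] by simp
next
  case (ESub a b)
  show ?case using ev_comp[OF ev_pair[OF ESub] eval_prog_sub] by simp
next
  case (EAdd a b)
  show ?case using ev_comp[OF ev_pair[OF EAdd] eval_prog_add] by simp
next
  case (EIterSnd a n)
  show ?case using ev_comp[OF ev_pair[OF EIterSnd] eval_prog_iter_snd] by simp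
next
  case (EAll n b)
  show ?case using ev_comp[OF ev_pair[OF ev_id EAll(1)] eval_prog_all[OF EAll(2)]] by simp
qed (auto intro: eval.intros eval_prog_const Oc)

definition conj_exp :: "exp \<Rightarrow> exp \<Rightarrow> exp" where
  "conj_exp a b = EIf a (EIf b (EConst 1) (EConst 0)) (EConst 0)"
definition disj_exp :: "exp \<Rightarrow> exp \<Rightarrow> exp" where
  "disj_exp a b = EIf a (EConst 1) (EIf b (EConst 1) (EConst 0))"
definition not_exp :: "exp \<Rightarrow> exp" where
  "not_exp a = EIf a (EConst 0) (EConst 1)"
definition eq_exp :: "exp \<Rightarrow> exp \<Rightarrow> exp" where
  "eq_exp a b = EIf (ESub a b) (EConst 0) (EIf (ESub b a) (EConst 0) (EConst 1))"
definition less_exp :: "exp \<Rightarrow> exp \<Rightarrow> exp" where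
  "less_exp a b = EIf (ESub b a) (EConst 1) (EConst 0)"

lemma exp_val_connectives [simp]:
  "exp_val g (conj_exp a b) x = of_bool (exp_val g a x \<noteq> 0 \<and> exp_val g b x \<noteq> 0)"
  "exp_val g (disj_exp a b) x = of_bool (exp_val g a x \<noteq> 0 \<or> exp_val g b x \<noteq> 0)"
  "exp_val g (not_exp a) x = of_bool (exp_val g a x = 0)"
  "exp_val g (eq_exp a b) x = of_bool (exp_val g a x = exp_val g b x)"
  "exp_val g (less_exp a b) x = of_bool (exp_val g a x < exp_val g b x)"
  by (auto simp: conj_exp_def disj_exp_def not_exp_def eq_exp_def less_exp_def)

definition conjs_exp :: "exp list \<Rightarrow> exp" where
  "conjs_exp es = foldr conj_exp es (EConst 1)"
definition disjs_exp :: "exp list \<Rightarrow> exp" where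
  "disjs_exp es = foldr disj_exp es (EConst 0)"

lemma exp_val_conjs_exp [simp]:
  "exp_val g (conjs_exp es) x = of_bool (\<forall>e\<in>set es. exp_val g e x \<noteq> 0)"
  by (induction es) (auto simp: conjs_exp_def)

lemma exp_val_disjs_exp [simp]:
  "exp_val g (disjs_exp es) x = of_bool (\<exists>e\<in>set es. exp_val g e x \<noteq> 0)"
  by (induction es) (auto simp: disjs_exp_def)

lemma encode_eq_iff [simp]: "encode p = encode q \<longleftrightarrow> p = q"
  by (induction p arbitrary: q) (case_tac q; simp add: prod_encode_eq)+

lemma Phi_encode: "Phi g (encode p) x y \<longleftrightarrow> eval g p x y"
  unfolding Phi_def by simp

lemma Phi_imp_program:
  assumes "Phi g e x y"
  obtains p where "e = encode p" "\<And>x y. Phi g e x y \<longleftrightarrow> eval g p x y"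
  using assms Phi_encode unfolding Phi_def by metis

lemma computable_in_iff_program:
  "computable_in X F \<longleftrightarrow> (\<exists>p. \<forall>n. eval (chi X) p n (F n))"
proof
  assume "computable_in X F"
  then obtain e where e: "\<And>n. Phi (chi X) e n (F n)"
    unfolding computable_in_def by blast
  from Phi_imp_program[OF e[of 0]] obtain p where "\<And>x y. Phi (chi X) e x y \<longleftrightarrow> eval (chi X) p x y"
    by blast
  with e show "\<exists>p. \<forall>n. eval (chi X) p n (F n)" by blast
next
  assume "\<exists>p. \<forall>n. eval (chi X) p n (F n)"
  then show "computable_in X F"
    unfolding computable_in_def by (metis Phi_encode)
qed

lemma computable_in_exp_val: "computable_in X (exp_val (chi X) e)"
  unfolding computable_in_iff_program by (blast intro: eval_compile ev_oracle)

lemma computable_in_eval_along: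
  assumes "computable_in X a" and "\<And>n. eval (chi X) p (a n) (b n)"
  shows "computable_in X b"
  using assms unfolding computable_in_iff_program by (blast intro: ev_comp)

lemma computable_in_exp_val_comp:
  assumes "computable_in X a"
  shows "computable_in X (\<lambda>n. exp_val (chi X) e (a n))"
  using assms by (rule computable_in_eval_along) (blast intro: eval_compile ev_oracle)

lemma computable_in_iterate:
  assumes step: "\<And>n. eval (chi X) p (a n) (a (Suc n))"
  shows "computable_in X a"
proof -
  have "eval (chi X) (Comp p Snd) (pair (pair 0 n) (a n)) (a (Suc n))" for n
    by (metis ev_comp ev_snd psnd_pair step)
  then have "eval (chi X) (Rec (prog_const (a 0)) (Comp p Snd)) (pair 0 n) (a n)" for n
    by (intro eval_Rec eval_prog_const)
  then have "eval (chi X) (Comp (Rec (prog_const (a 0)) (Comp p Snd)) (Pair Zero Ident)) n (a n)" for n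
    by (blast intro: ev_comp ev_pair ev_zero ev_id)
  then show ?thesis unfolding computable_in_iff_program by blast
qed

section \<open>A derivation calculus for convergence\<close>

definition J_eval :: "nat \<Rightarrow> nat \<Rightarrow> nat \<Rightarrow> nat" where
  "J_eval c x y = pair 0 (pair c (pair x y))"
definition J_nonzero :: "nat \<Rightarrow> nat \<Rightarrow> nat \<Rightarrow> nat" where
  "J_nonzero c x n = pair 1 (pair c (pair x n))"
text \<open>The padding puts the code at the same position in all three kinds of judgment.\<close>
definition J_code :: "nat \<Rightarrow> nat" where
  "J_code c = pair 2 (pair c 0)"

lemma J_eq_iff [simp]:
  "J_eval c x y = J_eval c' x' y' \<longleftrightarrow> c = c' \<and> x = x' \<and> y = y'"
  "J_nonzero c x n = J_nonzero c' x' n' \<longleftrightarrow> c = c' \<and> x = x' \<and> n = n'"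
  "J_code c = J_code c' \<longleftrightarrow> c = c'"
  "J_eval c x y \<noteq> J_nonzero c' x' n'" "J_nonzero c' x' n' \<noteq> J_eval c x y"
  "J_eval c x y \<noteq> J_code c'" "J_code c' \<noteq> J_eval c x y"
  "J_nonzero c x n \<noteq> J_code c'" "J_code c' \<noteq> J_nonzero c x n"
  by (auto simp: J_eval_def J_nonzero_def J_code_def prod_encode_eq)

definition judg_holds :: "(nat \<Rightarrow> nat) \<Rightarrow> nat \<Rightarrow> bool" where
  "judg_holds g J \<longleftrightarrow>
     (\<exists>p x y. J = J_eval (encode p) x y \<and> eval g p x y)
   \<or> (\<exists>c x n. J = J_nonzero c x n \<and> (\<forall>i<n. \<exists>p z. c = encode p \<and> eval g p (pair x i) (Suc z)))
   \<or> (\<exists>p. J = J_code (encode p))"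

lemma judg_holds_simps [simp]:
  "judg_holds g (J_eval c x y) \<longleftrightarrow> (\<exists>p. c = encode p \<and> eval g p x y)"
  "judg_holds g (J_nonzero c x n) \<longleftrightarrow> (\<forall>i<n. \<exists>p z. c = encode p \<and> eval g p (pair x i) (Suc z))"
  "judg_holds g (J_code c) \<longleftrightarrow> (\<exists>p. c = encode p)"
  by (auto simp: judg_holds_def)

definition basic_progs :: "recf list" where
  "basic_progs = [Zero, Succ, Ident, Fst, Snd, Oracle]"

inductive judg_axiom :: "(nat \<Rightarrow> nat) \<Rightarrow> nat \<Rightarrow> bool" for g where
  axiom_zero: "judg_axiom g (J_eval (encode Zero) x 0)"
| axiom_succ: "judg_axiom g (J_eval (encode Succ) x (Suc x))"
| axiom_ident: "judg_axiom g (J_eval (encode Ident) x x)"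
| axiom_fst: "judg_axiom g (J_eval (encode Fst) x (pfst x))"
| axiom_snd: "judg_axiom g (J_eval (encode Snd) x (psnd x))"
| axiom_oracle: "judg_axiom g (J_eval (encode Oracle) x (g x))"
| axiom_nonzero_0: "judg_axiom g (J_nonzero c x 0)"
| axiom_code: "p \<in> set basic_progs \<Longrightarrow> judg_axiom g (J_code (encode p))"

text \<open>The tags 6, 7, 8, 9 are those of \<^const>\<open>Comp\<close>, \<^const>\<open>Pair\<close>,
  \<^const>\<open>Rec\<close> and \<^const>\<open>Mu\<close> in \<^const>\<open>encode\<close>.\<close>
inductive judg_rule :: "nat \<Rightarrow> nat \<Rightarrow> nat \<Rightarrow> bool" where
  rule_comp: "judg_rule (J_eval (pair 6 (pair c d)) x z) (J_eval d x y) (J_eval c y z)"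
| rule_pair: "judg_rule (J_eval (pair 7 (pair c d)) x (pair y z)) (J_eval c x y) (J_eval d x z)"
| rule_rec_0: "judg_rule (J_eval (pair 8 (pair c d)) (pair a 0) y) (J_eval c a y) (J_code d)"
| rule_rec_Suc: "judg_rule (J_eval (pair 8 (pair c d)) (pair a (Suc n)) z)
    (J_eval (pair 8 (pair c d)) (pair a n) y) (J_eval d (pair (pair a n) y) z)"
| rule_nonzero_Suc: "judg_rule (J_nonzero c x (Suc n)) (J_nonzero c x n) (J_eval c (pair x n) (Suc y))"
| rule_mu: "judg_rule (J_eval (pair 9 c) x n) (J_nonzero c x n) (J_eval c (pair x n) 0)"
| rule_code_binary: "k \<in> {6, 7, 8} \<Longrightarrow> judg_rule (J_code (pair k (pair c d))) (J_code c) (J_code d)"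
| rule_code_mu: "judg_rule (J_code (pair 9 c)) (J_code c) (J_code c)"

lemma judg_axiom_sound: "judg_axiom g J \<Longrightarrow> judg_holds g J"
  by (induction rule: judg_axiom.induct)
    (auto intro: eval.intros simp: basic_progs_def simp del: encode.simps)

lemma pair_8_eq_encode:
  "pair 8 (pair c d) = encode r \<longleftrightarrow> (\<exists>p q. r = Rec p q \<and> c = encode p \<and> d = encode q)"
  by (cases r) (auto simp: prod_encode_eq)

lemma judg_rule_sound:
  assumes "judg_rule J P Q" "judg_holds g P" "judg_holds g Q"
  shows "judg_holds g J"
  using assms
  by (induction rule: judg_rule.induct)
    (auto simp del: encode.simps simp: encode.simps[symmetric] less_Suc_eq pair_8_eq_encode
      intro: eval.intros)

inductive derivable :: "(nat \<Rightarrow> nat) \<Rightarrow> nat \<Rightarrow> bool" for g where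
  derivable_axiom: "judg_axiom g J \<Longrightarrow> derivable g J"
| derivable_rule: "derivable g P \<Longrightarrow> derivable g Q \<Longrightarrow> judg_rule J P Q \<Longrightarrow> derivable g J"

lemma derivable_J_code: "derivable g (J_code (encode p))"
proof (induction p)
  case (Comp p q)
  show ?case using derivable_rule[OF Comp rule_code_binary[of 6]] by simp
next
  case (Pair p q)
  show ?case using derivable_rule[OF Pair rule_code_binary[of 7]] by simp
next
  case (Rec p q)
  show ?case using derivable_rule[OF Rec rule_code_binary[of 8]] by simp
next
  case (Mu p)
  show ?case using derivable_rule[OF Mu Mu rule_code_mu] by simp
qed (rule derivable_axiom, rule axiom_code, simp add: basic_progs_def)+

lemma derivable_J_nonzero:
  assumes "\<forall>i<n. \<exists>y. derivable g (J_eval c (pair x i) (Suc y))"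
  shows "derivable g (J_nonzero c x n)"
  using assms
proof (induction n)
  case 0
  show ?case by (intro derivable_axiom axiom_nonzero_0)
next
  case (Suc n)
  then obtain y where "derivable g (J_eval c (pair x n) (Suc y))" by blast
  moreover have "derivable g (J_nonzero c x n)" using Suc by simp
  ultimately show ?case using derivable_rule[OF _ _ rule_nonzero_Suc] by blast
qed

lemma eval_imp_derivable: "eval g p x y \<Longrightarrow> derivable g (J_eval (encode p) x y)"
proof (induction rule: eval.induct)
  case (ev_comp d x y c z)
  show ?case using derivable_rule[OF ev_comp.IH rule_comp] by simp
next
  case (ev_pair c x y d z)
  show ?case using derivable_rule[OF ev_pair.IH rule_pair] by simp
next
  case (ev_rec0 c a y d)
  show ?case using derivable_rule[OF ev_rec0.IH derivable_J_code rule_rec_0] by simp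
next
  case (ev_recS c d a n y z)
  have "derivable g (J_eval (pair 8 (pair (encode c) (encode d))) (pair a n) y)"
    using ev_recS.IH(1) by simp
  from derivable_rule[OF this ev_recS.IH(2) rule_rec_Suc] show ?case by simp
next
  case (ev_mu c x n)
  then have "derivable g (J_nonzero (encode c) x n)"
    by (blast intro: derivable_J_nonzero)
  with ev_mu.IH(1) show ?case using derivable_rule[OF _ _ rule_mu] by simp
qed (rule derivable_axiom, rule judg_axiom.intros)+

section \<open>Finite derivations and their codes\<close>

type_synonym entry = "nat \<times> nat \<times> nat"

definition justified :: "(nat \<Rightarrow> nat) \<Rightarrow> (nat \<Rightarrow> entry) \<Rightarrow> nat \<Rightarrow> bool" where
  "justified g D i \<longleftrightarrow> (case D i of (J, j, k) \<Rightarrow>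
     judg_axiom g J \<or> j < i \<and> k < i \<and> judg_rule J (fst (D j)) (fst (D k)))"

definition valid_derivation :: "(nat \<Rightarrow> nat) \<Rightarrow> (nat \<Rightarrow> entry) \<Rightarrow> nat \<Rightarrow> bool" where
  "valid_derivation g D n \<longleftrightarrow> (\<forall>i<n. justified g D i)"

lemma valid_derivation_sound:
  assumes "valid_derivation g D n" "i < n"
  shows "judg_holds g (fst (D i))"
  using assms(2)
proof (induction i rule: less_induct)
  case (less i)
  obtain J j k where D: "D i = (J, j, k)" by (metis prod_cases3)
  with assms(1) less.prems
  have "judg_axiom g J \<or> j < i \<and> k < i \<and> judg_rule J (fst (D j)) (fst (D k))"
    unfolding valid_derivation_def justified_def by fastforce
  with less D show ?case
    by (auto intro: judg_axiom_sound judg_rule_sound)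
qed

lemma justified_cong:
  assumes "\<And>m. m \<le> i \<Longrightarrow> D m = D' m"
  shows "justified g D i \<longleftrightarrow> justified g D' i"
proof -
  obtain J j k where "D i = (J, j, k)" by (metis prod_cases3)
  with assms show ?thesis
    unfolding justified_def by auto
qed

definition shift_entry :: "nat \<Rightarrow> entry \<Rightarrow> entry" where
  "shift_entry m = (\<lambda>(J, j, k). (J, j + m, k + m))"

lemma fst_shift_entry [simp]: "fst (shift_entry m e) = fst e"
  by (simp add: shift_entry_def split: prod.split)

lemma valid_derivation_append:
  assumes "valid_derivation g ((!) A) (length A)" "valid_derivation g ((!) B) (length B)"
  shows "valid_derivation g ((!) (A @ map (shift_entry (length A)) B)) (length A + length B)"
  unfolding valid_derivation_def
proof (intro allI impI)
  let ?C = "A @ map (shift_entry (length A)) B"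
  fix i assume i: "i < length A + length B"
  show "justified g ((!) ?C) i"
  proof (cases "i < length A")
    case True
    with assms(1) show ?thesis
      unfolding valid_derivation_def justified_def by (auto simp: nth_append split: prod.splits)
  next
    case False
    with i obtain i' where i': "i = length A + i'" "i' < length B"
      by (metis add_diff_inverse_nat nat_add_left_cancel_less)
    obtain J j k where Bi': "B ! i' = (J, j, k)" by (metis prod_cases3)
    with assms(2) i'(2)
    have "judg_axiom g J \<or> j < i' \<and> k < i' \<and> judg_rule J (fst (B ! j)) (fst (B ! k))"
      unfolding valid_derivation_def justified_def by fastforce
    moreover have "fst (?C ! (length A + m)) = fst (B ! m)" if "m < length B" for m
      using that by (simp add: nth_append)
    ultimately show ?thesis
      using i' Bi' by (auto simp: justified_def nth_append shift_entry_def add.commute[of _ "length A"])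
  qed
qed

lemma valid_derivation_snoc:
  assumes "valid_derivation g ((!) L) (length L)"
    and "judg_axiom g J \<or> j < length L \<and> k < length L \<and> judg_rule J (fst (L ! j)) (fst (L ! k))"
  shows "valid_derivation g ((!) (L @ [(J, j, k)])) (Suc (length L))"
  unfolding valid_derivation_def
proof (intro allI impI)
  fix i assume "i < Suc (length L)"
  then consider "i < length L" | "i = length L" by linarith
  then show "justified g ((!) (L @ [(J, j, k)])) i"
  proof cases
    case 1
    with assms(1) show ?thesis
      unfolding valid_derivation_def justified_def by (fastforce simp: nth_append split: prod.splits)
  next
    case 2
    with assms(2) show ?thesis by (auto simp: justified_def nth_append)
  qed
qed

lemma derivable_imp_valid_derivation:
  assumes "derivable g J"
  shows "\<exists>L. valid_derivation g ((!) L) (length L) \<and> L \<noteq> [] \<and> fst (last L) = J"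
  using assms
proof (induction rule: derivable.induct)
  case (derivable_axiom J)
  then have "valid_derivation g ((!) [(J, 0, 0)]) (length [(J, 0, 0)])"
    by (auto simp: valid_derivation_def justified_def)
  then show ?case by fastforce
next
  case (derivable_rule P Q J)
  then obtain A B where A: "valid_derivation g ((!) A) (length A)" "A \<noteq> []" "fst (last A) = P"
    and B: "valid_derivation g ((!) B) (length B)" "B \<noteq> []" "fst (last B) = Q"
    by blast
  let ?m = "length A" and ?n = "length B"
  let ?C = "A @ map (shift_entry ?m) B"
  have C: "valid_derivation g ((!) ?C) (length ?C)"
    using valid_derivation_append[OF A(1) B(1)] by simp
  have P: "fst (?C ! (?m - 1)) = P"
    using A(2,3) by (simp add: nth_append last_conv_nth)
  have Q: "fst (?C ! (?m + (?n - 1))) = Q"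
    using B(2,3) by (simp add: nth_append last_conv_nth)
  have "0 < ?m" "0 < ?n"
    using A(2) B(2) by auto
  note [simp del] = length_greater_0_conv
  let ?L = "?C @ [(J, ?m - 1, ?m + (?n - 1))]"
  have "valid_derivation g ((!) ?L) (length ?L)"
    unfolding length_append_singleton
  proof (rule valid_derivation_snoc[OF C], intro disjI2 conjI)
    show "?m - 1 < length ?C" "?m + (?n - 1) < length ?C"
      using \<open>0 < ?m\<close> \<open>0 < ?n\<close> by simp_all
    show "judg_rule J (fst (?C ! (?m - 1))) (fst (?C ! (?m + (?n - 1))))"
      unfolding P Q by (rule derivable_rule.hyps(3))
  qed
  moreover have "?L \<noteq> []" "fst (last ?L) = J"
    by simp_all
  ultimately show ?case by blast
qed

fun code_list :: "entry list \<Rightarrow> nat" where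
  "code_list [] = 0"
| "code_list ((J, j, k) # L) = pair (pair J (pair j k)) (code_list L)"

definition decode_entry :: "nat \<Rightarrow> nat \<Rightarrow> entry" where
  "decode_entry l i = (let E = pfst ((psnd ^^ i) l) in (pfst E, pfst (psnd E), psnd (psnd E)))"

lemma decode_entry_code_list: "i < length L \<Longrightarrow> decode_entry (code_list L) i = L ! i"
proof (induction L arbitrary: i)
  case (Cons e L)
  then show ?case
    by (cases e; cases i) (auto simp: decode_entry_def funpow_Suc_right simp del: funpow.simps)
qed simp

text \<open>\<open>w = \<langle>n, l\<rangle>\<close> codes a derivation of length \<open>n + 1\<close> whose last judgment says that
  the program with index \<open>e\<close> converges on input \<open>e\<close>.\<close>
definition halting_witness :: "(nat \<Rightarrow> nat) \<Rightarrow> nat \<Rightarrow> nat \<Rightarrow> bool" where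
  "halting_witness g e w \<longleftrightarrow> valid_derivation g (decode_entry (psnd w)) (Suc (pfst w))
     \<and> (\<exists>y. fst (decode_entry (psnd w) (pfst w)) = J_eval e e y)"

lemma ex_halting_witness_iff: "(\<exists>w. halting_witness g e w) \<longleftrightarrow> (\<exists>y. Phi g e e y)"
proof
  assume "\<exists>w. halting_witness g e w"
  then obtain w y where "valid_derivation g (decode_entry (psnd w)) (Suc (pfst w))"
    "fst (decode_entry (psnd w) (pfst w)) = J_eval e e y"
    unfolding halting_witness_def by blast
  then have "judg_holds g (J_eval e e y)"
    by (metis valid_derivation_sound lessI)
  then show "\<exists>y. Phi g e e y"
    unfolding Phi_def by auto
next
  assume "\<exists>y. Phi g e e y"
  then obtain p y where "e = encode p" "eval g p e y"
    unfolding Phi_def by blast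
  then have "derivable g (J_eval e e y)"
    using eval_imp_derivable by blast
  then obtain L where L: "valid_derivation g ((!) L) (length L)" "L \<noteq> []" "fst (last L) = J_eval e e y"
    using derivable_imp_valid_derivation by blast
  have "justified g (decode_entry (code_list L)) i \<longleftrightarrow> justified g ((!) L) i" if "i < length L" for i
    using that by (intro justified_cong) (simp add: decode_entry_code_list)
  with L(1) have "valid_derivation g (decode_entry (code_list L)) (length L)"
    unfolding valid_derivation_def by simp
  moreover have "fst (decode_entry (code_list L) (length L - 1)) = J_eval e e y"
    using L(2,3) by (simp add: decode_entry_code_list last_conv_nth)
  ultimately have "halting_witness g e (pair (length L - 1) (code_list L))"
    unfolding halting_witness_def using L(2) by auto
  then show "\<exists>w. halting_witness g e w" ..
qed

section \<open>Deciding derivations by an expression\<close>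

definition jcode :: "nat \<Rightarrow> nat" where "jcode J = pfst (psnd J)"
definition jin :: "nat \<Rightarrow> nat" where "jin J = pfst (psnd (psnd J))"
definition jout :: "nat \<Rightarrow> nat" where "jout J = psnd (psnd (psnd J))"
definition arg1 :: "nat \<Rightarrow> nat" where "arg1 c = pfst (psnd c)"
definition arg2 :: "nat \<Rightarrow> nat" where "arg2 c = psnd (psnd c)"

lemma judg_components [simp]:
  "jcode (J_eval c x y) = c" "jin (J_eval c x y) = x" "jout (J_eval c x y) = y"
  "jcode (J_nonzero c x n) = c" "jin (J_nonzero c x n) = x" "jout (J_nonzero c x n) = n"
  "jcode (J_code c) = c"
  "arg1 (pair k (pair a b)) = a" "arg2 (pair k (pair a b)) = b"
  by (simp_all add: jcode_def jin_def jout_def arg1_def arg2_def J_eval_def J_nonzero_def J_code_def)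

text \<open>Whether \<open>J\<close> is an axiom, or a rule instance with premises \<open>P\<close> and \<open>Q\<close>, can be
  checked after reading all variables of the rule off \<open>J\<close>, \<open>P\<close> and \<open>Q\<close> by projections.\<close>
lemma judg_axiom_iff:
  "judg_axiom g J \<longleftrightarrow>
     J = J_eval (encode Zero) (jin J) 0 \<or> J = J_eval (encode Succ) (jin J) (Suc (jin J))
   \<or> J = J_eval (encode Ident) (jin J) (jin J) \<or> J = J_eval (encode Fst) (jin J) (pfst (jin J))
   \<or> J = J_eval (encode Snd) (jin J) (psnd (jin J)) \<or> J = J_eval (encode Oracle) (jin J) (g (jin J))
   \<or> J = J_nonzero (jcode J) (jin J) 0
   \<or> (\<exists>p\<in>set basic_progs. J = J_code (encode p))"
  (is "_ \<longleftrightarrow> ?projections")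
proof
  assume "judg_axiom g J"
  then show ?projections
    by (cases rule: judg_axiom.cases) (auto simp del: encode.simps)
next
  assume ?projections
  then show "judg_axiom g J"
    using axiom_zero[of g "jin J"] axiom_succ[of g "jin J"] axiom_ident[of g "jin J"]
      axiom_fst[of g "jin J"] axiom_snd[of g "jin J"] axiom_oracle[of g "jin J"]
      axiom_nonzero_0[of g "jcode J" "jin J"] axiom_code[of _ g]
    by (elim disjE bexE) metis+
qed

lemma judg_rule_iff:
  "judg_rule J P Q \<longleftrightarrow>
     J = J_eval (pair 6 (pair (arg1 (jcode J)) (arg2 (jcode J)))) (jin J) (jout J)
       \<and> P = J_eval (arg2 (jcode J)) (jin J) (jout P) \<and> Q = J_eval (arg1 (jcode J)) (jout P) (jout J)
   \<or> J = J_eval (pair 7 (pair (arg1 (jcode J)) (arg2 (jcode J)))) (jin J) (pair (jout P) (jout Q))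
       \<and> P = J_eval (arg1 (jcode J)) (jin J) (jout P) \<and> Q = J_eval (arg2 (jcode J)) (jin J) (jout Q)
   \<or> J = J_eval (pair 8 (pair (arg1 (jcode J)) (arg2 (jcode J)))) (pair (pfst (jin J)) 0) (jout J)
       \<and> P = J_eval (arg1 (jcode J)) (pfst (jin J)) (jout J) \<and> Q = J_code (arg2 (jcode J))
   \<or> J = J_eval (pair 8 (pair (arg1 (jcode J)) (arg2 (jcode J))))
           (pair (pfst (jin J)) (Suc (psnd (jin J) - 1))) (jout J)
       \<and> P = J_eval (pair 8 (pair (arg1 (jcode J)) (arg2 (jcode J))))
           (pair (pfst (jin J)) (psnd (jin J) - 1)) (jout P)
       \<and> Q = J_eval (arg2 (jcode J)) (pair (pair (pfst (jin J)) (psnd (jin J) - 1)) (jout P)) (jout J)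
   \<or> J = J_nonzero (jcode J) (jin J) (Suc (jout J - 1)) \<and> P = J_nonzero (jcode J) (jin J) (jout J - 1)
       \<and> Q = J_eval (jcode J) (pair (jin J) (jout J - 1)) (Suc (jout Q - 1))
   \<or> J = J_eval (pair 9 (psnd (jcode J))) (jin J) (jout J)
       \<and> P = J_nonzero (psnd (jcode J)) (jin J) (jout J) \<and> Q = J_eval (psnd (jcode J)) (pair (jin J) (jout J)) 0
   \<or> pfst (jcode J) \<in> {6, 7, 8}
       \<and> J = J_code (pair (pfst (jcode J)) (pair (arg1 (jcode J)) (arg2 (jcode J))))
       \<and> P = J_code (arg1 (jcode J)) \<and> Q = J_code (arg2 (jcode J))
   \<or> J = J_code (pair 9 (psnd (jcode J))) \<and> P = J_code (psnd (jcode J)) \<and> Q = J_code (psnd (jcode J))"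
  (is "_ \<longleftrightarrow> ?projections")
proof
  assume "judg_rule J P Q"
  then show ?projections
    by (cases rule: judg_rule.cases) simp_all
next
  let ?c = "jcode J"
  assume ?projections
  then show "judg_rule J P Q"
    using rule_comp[of "arg1 ?c" "arg2 ?c" "jin J" "jout J" "jout P"]
      rule_pair[of "arg1 ?c" "arg2 ?c" "jin J" "jout P" "jout Q"]
      rule_rec_0[of "arg1 ?c" "arg2 ?c" "pfst (jin J)" "jout J"]
      rule_rec_Suc[of "arg1 ?c" "arg2 ?c" "pfst (jin J)" "psnd (jin J) - 1" "jout J" "jout P"]
      rule_nonzero_Suc[of ?c "jin J" "jout J - 1" "jout Q - 1"]
      rule_mu[of "psnd ?c" "jin J" "jout J"]
      rule_code_binary[of "pfst ?c" "arg1 ?c" "arg2 ?c"]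
      rule_code_mu[of "psnd ?c"]
    by (elim disjE conjE) metis+
qed

definition J_eval_exp :: "exp \<Rightarrow> exp \<Rightarrow> exp \<Rightarrow> exp" where
  "J_eval_exp c x y = EPair (EConst 0) (EPair c (EPair x y))"
definition J_nonzero_exp :: "exp \<Rightarrow> exp \<Rightarrow> exp \<Rightarrow> exp" where
  "J_nonzero_exp c x n = EPair (EConst 1) (EPair c (EPair x n))"
definition J_code_exp :: "exp \<Rightarrow> exp" where
  "J_code_exp c = EPair (EConst 2) (EPair c (EConst 0))"
definition jcode_exp :: "exp \<Rightarrow> exp" where "jcode_exp J = EFst (ESnd J)"
definition jin_exp :: "exp \<Rightarrow> exp" where "jin_exp J = EFst (ESnd (ESnd J))"
definition jout_exp :: "exp \<Rightarrow> exp" where "jout_exp J = ESnd (ESnd (ESnd J))"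
definition arg1_exp :: "exp \<Rightarrow> exp" where "arg1_exp c = EFst (ESnd c)"
definition arg2_exp :: "exp \<Rightarrow> exp" where "arg2_exp c = ESnd (ESnd c)"

lemma exp_val_judgment_exps [simp]:
  "exp_val g (J_eval_exp c x y) z = J_eval (exp_val g c z) (exp_val g x z) (exp_val g y z)"
  "exp_val g (J_nonzero_exp c x n) z = J_nonzero (exp_val g c z) (exp_val g x z) (exp_val g n z)"
  "exp_val g (J_code_exp c) z = J_code (exp_val g c z)"
  "exp_val g (jcode_exp J) z = jcode (exp_val g J z)"
  "exp_val g (jin_exp J) z = jin (exp_val g J z)"
  "exp_val g (jout_exp J) z = jout (exp_val g J z)"
  "exp_val g (arg1_exp c) z = arg1 (exp_val g c z)"
  "exp_val g (arg2_exp c) z = arg2 (exp_val g c z)"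
  by (simp_all add: J_eval_exp_def J_nonzero_exp_def J_code_exp_def J_eval_def J_nonzero_def
      J_code_def jcode_exp_def jin_exp_def jout_exp_def arg1_exp_def arg2_exp_def
      jcode_def jin_def jout_def arg1_def arg2_def)

definition axiom_exp :: "exp \<Rightarrow> exp" where
  "axiom_exp J = (let x = jin_exp J in disjs_exp (
     [eq_exp J (J_eval_exp (EConst (encode Zero)) x (EConst 0)),
      eq_exp J (J_eval_exp (EConst (encode Succ)) x (ESuc x)),
      eq_exp J (J_eval_exp (EConst (encode Ident)) x x),
      eq_exp J (J_eval_exp (EConst (encode Fst)) x (EFst x)),
      eq_exp J (J_eval_exp (EConst (encode Snd)) x (ESnd x)),
      eq_exp J (J_eval_exp (EConst (encode Oracle)) x (EOracle x)),
      eq_exp J (J_nonzero_exp (jcode_exp J) x (EConst 0))]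
     @ map (\<lambda>p. eq_exp J (EConst (J_code (encode p)))) basic_progs))"

lemma exp_val_axiom_exp: "exp_val g (axiom_exp J) x = of_bool (judg_axiom g (exp_val g J x))"
  unfolding axiom_exp_def judg_axiom_iff Let_def
  by (simp only: exp_val_disjs_exp set_append list.set set_map bex_simps bex_Un Un_insert_left
      Un_empty_left exp_val_connectives exp_val.simps exp_val_judgment_exps of_bool_eq_0_iff not_not)

definition rule_exp :: "exp \<Rightarrow> exp \<Rightarrow> exp \<Rightarrow> exp" where
  "rule_exp J P Q = (let c = jcode_exp J; x = jin_exp J; z = jout_exp J; y = jout_exp P;
      a1 = arg1_exp c; a2 = arg2_exp c; n = ESub (ESnd x) (EConst 1); m = ESub z (EConst 1) in
    disjs_exp [
      conjs_exp [eq_exp J (J_eval_exp (EPair (EConst 6) (EPair a1 a2)) x z),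
        eq_exp P (J_eval_exp a2 x y), eq_exp Q (J_eval_exp a1 y z)],
      conjs_exp [eq_exp J (J_eval_exp (EPair (EConst 7) (EPair a1 a2)) x (EPair y (jout_exp Q))),
        eq_exp P (J_eval_exp a1 x y), eq_exp Q (J_eval_exp a2 x (jout_exp Q))],
      conjs_exp [eq_exp J (J_eval_exp (EPair (EConst 8) (EPair a1 a2)) (EPair (EFst x) (EConst 0)) z),
        eq_exp P (J_eval_exp a1 (EFst x) z), eq_exp Q (J_code_exp a2)],
      conjs_exp [eq_exp J (J_eval_exp (EPair (EConst 8) (EPair a1 a2)) (EPair (EFst x) (ESuc n)) z),
        eq_exp P (J_eval_exp (EPair (EConst 8) (EPair a1 a2)) (EPair (EFst x) n) y),
        eq_exp Q (J_eval_exp a2 (EPair (EPair (EFst x) n) y) z)],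
      conjs_exp [eq_exp J (J_nonzero_exp c x (ESuc m)), eq_exp P (J_nonzero_exp c x m),
        eq_exp Q (J_eval_exp c (EPair x m) (ESuc (ESub (jout_exp Q) (EConst 1))))],
      conjs_exp [eq_exp J (J_eval_exp (EPair (EConst 9) (ESnd c)) x z),
        eq_exp P (J_nonzero_exp (ESnd c) x z), eq_exp Q (J_eval_exp (ESnd c) (EPair x z) (EConst 0))],
      conjs_exp [disjs_exp [eq_exp (EFst c) (EConst 6), eq_exp (EFst c) (EConst 7), eq_exp (EFst c) (EConst 8)],
        eq_exp J (J_code_exp (EPair (EFst c) (EPair a1 a2))),
        eq_exp P (J_code_exp a1), eq_exp Q (J_code_exp a2)],
      conjs_exp [eq_exp J (J_code_exp (EPair (EConst 9) (ESnd c))),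
        eq_exp P (J_code_exp (ESnd c)), eq_exp Q (J_code_exp (ESnd c))]])"

lemma exp_val_rule_exp:
  "exp_val g (rule_exp J P Q) x = of_bool (judg_rule (exp_val g J x) (exp_val g P x) (exp_val g Q x))"
  unfolding rule_exp_def judg_rule_iff Let_def
  by (simp only: exp_val_disjs_exp exp_val_conjs_exp list.set bex_simps ball_simps insert_iff
      empty_iff exp_val_connectives exp_val.simps exp_val_judgment_exps of_bool_eq_0_iff not_not
      of_bool_eq_iff simp_thms)

definition judg_at_exp :: "exp \<Rightarrow> exp \<Rightarrow> exp" where
  "judg_at_exp l i = EFst (EFst (EIterSnd l i))"
definition left_at_exp :: "exp \<Rightarrow> exp \<Rightarrow> exp" where
  "left_at_exp l i = EFst (ESnd (EFst (EIterSnd l i)))"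
definition right_at_exp :: "exp \<Rightarrow> exp \<Rightarrow> exp" where
  "right_at_exp l i = ESnd (ESnd (EFst (EIterSnd l i)))"

lemma exp_val_entry_exps [simp]:
  "exp_val g (judg_at_exp l i) x = fst (decode_entry (exp_val g l x) (exp_val g i x))"
  "exp_val g (left_at_exp l i) x = fst (snd (decode_entry (exp_val g l x) (exp_val g i x)))"
  "exp_val g (right_at_exp l i) x = snd (snd (decode_entry (exp_val g l x) (exp_val g i x)))"
  by (simp_all add: judg_at_exp_def left_at_exp_def right_at_exp_def decode_entry_def Let_def)

definition step_exp :: "exp \<Rightarrow> exp \<Rightarrow> exp" where
  "step_exp l i = disj_exp (axiom_exp (judg_at_exp l i))
     (conjs_exp [less_exp (left_at_exp l i) i, less_exp (right_at_exp l i) i,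
       rule_exp (judg_at_exp l i) (judg_at_exp l (left_at_exp l i)) (judg_at_exp l (right_at_exp l i))])"

lemma exp_val_step_exp:
  "exp_val g (step_exp l i) x = of_bool (justified g (decode_entry (exp_val g l x)) (exp_val g i x))"
  by (simp add: step_exp_def justified_def exp_val_axiom_exp exp_val_rule_exp split: prod.split)

text \<open>The input is \<open>\<langle>e, \<langle>n, l\<rangle>\<rangle>\<close>; inside \<^const>\<open>EAll\<close> it becomes
  \<open>\<langle>\<langle>e, \<langle>n, l\<rangle>\<rangle>, i\<rangle>\<close>.\<close>
definition checker :: exp where
  "checker = (let e = EFst EVar; n = EFst (ESnd EVar); J = judg_at_exp (ESnd (ESnd EVar)) n in
     conj_exp (EAll n (step_exp (ESnd (ESnd (EFst EVar))) (ESnd EVar)))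
       (eq_exp J (J_eval_exp e e (jout_exp J))))"

lemma ex_J_eval_iff: "(\<exists>y. J = J_eval c x y) \<longleftrightarrow> J = J_eval c x (jout J)"
  by auto

lemma exp_val_checker: "exp_val g checker (pair e w) = of_bool (halting_witness g e w)"
  unfolding checker_def halting_witness_def valid_derivation_def ex_J_eval_iff Let_def
  by (simp add: exp_val_step_exp less_Suc_eq_le)

section \<open>Elements of \<open>K\<^sub>2\<^sup>X\<close> and their images\<close>

lemma exp_val_in_K2_carrier: "exp_val (chi X) e \<in> K2_carrier X"
  unfolding K2_carrier_def by (simp add: computable_in_exp_val)

lemma const_in_K2_carrier: "(\<lambda>_. k) \<in> K2_carrier X"
proof -
  have "(\<lambda>_. k) = exp_val (chi X) (EConst k)"
    by (simp add: fun_eq_iff)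
  then show ?thesis by (simp add: exp_val_in_K2_carrier)
qed

lemma app2I:
  assumes "g 0 = encode p" and "\<And>n. eval (join g h) p n (k n)"
  shows "app2 g h k"
  using assms unfolding app2_def by (simp add: Phi_encode)

definition prog_arg :: recf where
  "prog_arg = Comp Oracle (prog_const 1)"

definition prog_left_tail :: recf where
  "prog_left_tail = compile Oracle (EOracle (ESuc (ESuc (EAdd EVar EVar))))"

lemma eval_prog_arg: "eval (join g h) prog_arg n (h 0)"
  using ev_comp[OF eval_prog_const ev_oracle, of "join g h" 1 n] by (simp add: prog_arg_def join_def)

lemma eval_prog_left_tail: "eval (join g h) prog_left_tail z (g (Suc z))"
proof -
  have "exp_val (join g h) (EOracle (ESuc (ESuc (EAdd EVar EVar)))) z = g (Suc z)"
    by (simp add: join_def)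
  then show ?thesis
    unfolding prog_left_tail_def by (metis eval_compile ev_oracle)
qed

definition succ_prog :: recf where
  "succ_prog = Comp Succ prog_arg"

lemma app2_succ: "app2 (\<lambda>_. encode succ_prog) (\<lambda>_. e) (\<lambda>_. Suc e)"
  by (rule app2I) (auto simp: succ_prog_def intro: ev_comp[OF eval_prog_arg ev_succ])

definition halt_test :: "nat set \<Rightarrow> nat \<Rightarrow> nat \<Rightarrow> nat" where
  "halt_test X e n = exp_val (chi X) checker (pair e n)"

lemma halt_test_in_K2_carrier: "halt_test X e \<in> K2_carrier X"
proof -
  have "halt_test X e = exp_val (chi X) (EApp checker (EPair (EConst e) EVar))"
    by (simp add: fun_eq_iff halt_test_def)
  then show ?thesis by (simp add: exp_val_in_K2_carrier)
qed

lemma halt_test_eq_0_iff: "halt_test X e = (\<lambda>_. 0) \<longleftrightarrow> e \<notin> jump X"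
  by (auto simp: fun_eq_iff halt_test_def exp_val_checker jump_def ex_halting_witness_iff[symmetric])

text \<open>A program of \<open>K\<^sub>2\<^sup>X\<close> sees only its joined oracle, so \<open>halt_elem X\<close> stores the
  characteristic function of \<open>X\<close> behind the code of its program.\<close>
definition halt_prog :: recf where
  "halt_prog = Comp (compile prog_left_tail checker) (Pair prog_arg Ident)"

definition halt_elem :: "nat set \<Rightarrow> nat \<Rightarrow> nat" where
  "halt_elem X n = (if n = 0 then encode halt_prog else chi X (n - 1))"

lemma halt_elem_in_K2_carrier: "halt_elem X \<in> K2_carrier X"
proof -
  have "halt_elem X = exp_val (chi X) (EIf EVar (EOracle (ESub EVar (EConst 1))) (EConst (encode halt_prog)))"
    by (simp add: fun_eq_iff halt_elem_def)
  then show ?thesis by (simp add: exp_val_in_K2_carrier)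
qed

lemma app2_halt: "app2 (halt_elem X) (\<lambda>_. e) (halt_test X e)"
proof (rule app2I)
  show "halt_elem X 0 = encode halt_prog" by (simp add: halt_elem_def)
  let ?g = "join (halt_elem X) (\<lambda>_. e)"
  have "eval ?g prog_left_tail z (chi X z)" for z
    using eval_prog_left_tail[of "halt_elem X"] by (simp add: halt_elem_def)
  then have "eval ?g (compile prog_left_tail checker) (pair e n) (halt_test X e n)" for n
    unfolding halt_test_def by (rule eval_compile)
  then show "eval ?g halt_prog n (halt_test X e n)" for n
    unfolding halt_prog_def using eval_prog_arg[of "halt_elem X"]
    by (blast intro: ev_comp ev_pair ev_id)
qed

lemma K2_embeds_K1_program:
  assumes "K2_embeds_K1 X Y f" "a \<in> K2_carrier X"
    and "\<And>e::nat. b e \<in> K2_carrier X" "\<And>e. c e \<in> K2_carrier X" "\<And>e. app2 a (b e) (c e)"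
  obtains p where "\<And>e. eval (chi Y) p (f (b e)) (f (c e))"
proof -
  have "Phi (chi Y) (f a) (f (b e)) (f (c e))" for e
    using assms unfolding K2_embeds_K1_def app1_def by blast
  with Phi_imp_program[OF this[of 0]] that show ?thesis by metis
qed

lemma chi_eq_of_bool: "chi A = (\<lambda>x. of_bool (x \<in> A))"
  by (simp add: fun_eq_iff chi_def)

theorem theorem6p9:
  fixes X Y :: "nat set"
  assumes "\<exists>f. K2_embeds_K1 X Y f"
  shows "turing_le (jump X) Y"
proof -
  from assms obtain f where f: "K2_embeds_K1 X Y f" ..
  obtain p where "\<And>e. eval (chi Y) p (f (\<lambda>_. e)) (f (\<lambda>_. Suc e))"
    using K2_embeds_K1_program[where b = "\<lambda>e _. e" and c = "\<lambda>e _. Suc e", OF f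
        const_in_K2_carrier const_in_K2_carrier const_in_K2_carrier app2_succ] by blast
  then have "computable_in Y (\<lambda>e. f (\<lambda>_. e))"
    by (rule computable_in_iterate)
  moreover obtain q where "\<And>e. eval (chi Y) q (f (\<lambda>_. e)) (f (halt_test X e))"
    using K2_embeds_K1_program[where b = "\<lambda>e _. e" and c = "halt_test X", OF f
        halt_elem_in_K2_carrier const_in_K2_carrier halt_test_in_K2_carrier app2_halt] by blast
  ultimately have "computable_in Y (\<lambda>e. f (halt_test X e))"
    by (rule computable_in_eval_along)
  then have "computable_in Y
      (\<lambda>e. exp_val (chi Y) (not_exp (eq_exp EVar (EConst (f (\<lambda>_. 0))))) (f (halt_test X e)))"
    by (rule computable_in_exp_val_comp)
  moreover have "f (halt_test X e) = f (\<lambda>_. 0) \<longleftrightarrow> e \<notin> jump X" for e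
    using f halt_test_in_K2_carrier const_in_K2_carrier halt_test_eq_0_iff
    unfolding K2_embeds_K1_def by (metis inj_on_eq_iff)
  ultimately show ?thesis
    unfolding turing_le_def by (simp add: chi_eq_of_bool)
qed

end
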